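(* Assume (A1)–(A3), let SLPMM be run with parameters satisfying $2\alpha-p\kappa_g^2\sigma>0$, let $K\ge1$ be an integer and $\bar x^K:=\frac1K\sum_{k=0}^{K-1}x^k$. Then for each $i=1,\dots,p$, $$\mathbb E[g_i(\bar x^K)]\le\frac{1}{\sigma K}\mathbb E[\lambda_i^K]+\frac{\kappa_g}{\alpha}\big(\kappa_f+\sqrt p\,\nu_g\kappa_g\sigma\big)+\frac{\sqrt p\,\kappa_g^2}{\alpha K}\sum_{k=0}^{K-1}\mathbb E[\|\lambda^k\|].$$
   Context: Let $\mathcal C\subset\mathbb R^n$ be a nonempty compact convex set. Let $\xi$ be a random vector whose distribution is supported on $\Xi\subseteq\mathbb R^q$, and let $F:\mathcal C\times\Xi\to\mathbb R$ and $G_i:\mathcal C\times\Xi\to\mathbb R$ ($i=1,\dots,p$) be such that $F(\cdot,\xi)$, $G_i(\cdot,\xi)$ are convex and continuous on $\mathcal C$ for every $\xi$, and $f(x):=\mathbb E[F(x,\xi)]$, $g_i(x):=\mathbb E[G_i(x,\xi)]$ are finite on $\mathcal C$. Write $G=(G_1,\dots,G_p)^T$. Stochastic subgradients: $v_0(x,\xi)\in\partial_xF(x,\xi)$, $v_i(x,\xi)\in\partial_xG_i(x,\xi)$. $[t]_+=\max\{t,0\}$, $[t]_+^2=(\max\{t,0\})^2$. SLPMM: fix $\sigma,\alpha>0$, $x^0\in\mathcal C$, $\lambda^0=0\in\mathbb R^p$, i.i.d. copies $\xi^0,\xi^1,\dots$ of $\xi$. For $k\ge0$, $x^{k+1}=\arg\min_{x\in\mathcal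 C}\{\mathcal L^k_\sigma(x,\lambda^k)+\frac{\alpha}{2}\|x-x^k\|^2\}$ with $\mathcal L^k_\sigma(x,\lambda):=F(x^k,\xi^k)+\langle v_0(x^k,\xi^k),x-x^k\rangle+\frac{1}{2\sigma}[\sum_{i=1}^p[\lambda_i+\sigma(G_i(x^k,\xi^k)+\langle v_i(x^k,\xi^k),x-x^k\rangle)]_+^2-\|\lambda\|^2]$, and $\lambda_i^{k+1}=[\lambda_i^k+\sigma(G_i(x^k,\xi^k)+\langle v_i(x^k,\xi^k),x^{k+1}-x^k\rangle)]_+$. Assumptions: (A1) $\|x'-x''\|\le R$ on $\mathcal C$. (A2) $\|G(x,\xi)\|\le\nu_g$ for all $x\in\mathcal C,\xi\in\Xi$. (A3) $\|v_0(x,\xi)\|\le\kappa_f$, $\|v_i(x,\xi)\|\le\kappa_g$ for all $x,\xi$. *)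

theory Defs
  imports "HOL-Probability.Probability"
begin

text \<open>Constraint indices are 0,...,p-1 (the paper's 1,...,p). Multiplier vectors in R^p
  are represented as functions nat => real, only the entries i < p being relevant.\<close>

definition vnorm :: "nat \<Rightarrow> (nat \<Rightarrow> real) \<Rightarrow> real" where
  "vnorm p lam = sqrt (\<Sum>i<p. (lam i)^2)"

definition subgrad_on :: "'a::real_inner set \<Rightarrow> ('a \<Rightarrow> real) \<Rightarrow> 'a \<Rightarrow> 'a \<Rightarrow> bool" where
  "subgrad_on C f x u \<longleftrightarrow> (\<forall>y\<in>C. f x + inner u (y - x) \<le> f y)"

definition slpmm_L ::
  "nat \<Rightarrow> real \<Rightarrow> ('a::real_inner \<Rightarrow> 'b \<Rightarrow> real) \<Rightarrow> (nat \<Rightarrow> 'a \<Rightarrow> 'b \<Rightarrow> real)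
   \<Rightarrow> ('a \<Rightarrow> 'b \<Rightarrow> 'a) \<Rightarrow> (nat \<Rightarrow> 'a \<Rightarrow> 'b \<Rightarrow> 'a) \<Rightarrow> 'a \<Rightarrow> 'b \<Rightarrow> 'a \<Rightarrow> (nat \<Rightarrow> real) \<Rightarrow> real" where
  "slpmm_L p \<sigma> F G v0 v xk \<xi> y lam =
     F xk \<xi> + inner (v0 xk \<xi>) (y - xk)
     + (1 / (2 * \<sigma>)) * ((\<Sum>i<p. (max (lam i + \<sigma> * (G i xk \<xi> + inner (v i xk \<xi>) (y - xk))) 0)^2)
                         - (vnorm p lam)^2)"

definition slpmm_step ::
  "'a::real_inner set \<Rightarrow> nat \<Rightarrow> real \<Rightarrow> real \<Rightarrow> ('a \<Rightarrow> 'b \<Rightarrow> real) \<Rightarrow> (nat \<Rightarrow> 'a \<Rightarrow> 'b \<Rightarrow> real)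
   \<Rightarrow> ('a \<Rightarrow> 'b \<Rightarrow> 'a) \<Rightarrow> (nat \<Rightarrow> 'a \<Rightarrow> 'b \<Rightarrow> 'a) \<Rightarrow> 'a \<times> (nat \<Rightarrow> real) \<Rightarrow> 'b \<Rightarrow> 'a \<times> (nat \<Rightarrow> real)" where
  "slpmm_step C p \<sigma> \<alpha> F G v0 v s \<xi> =
     (let xk = fst s; lam = snd s;
          obj = (\<lambda>y. slpmm_L p \<sigma> F G v0 v xk \<xi> y lam + \<alpha> / 2 * (norm (y - xk))^2);
          x' = (SOME y. y \<in> C \<and> (\<forall>z\<in>C. obj y \<le> obj z))
      in (x', \<lambda>i. if i < p then max (lam i + \<sigma> * (G i xk \<xi> + inner (v i xk \<xi>) (x' - xk))) 0 else 0))"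

primrec slpmm ::
  "'a::real_inner set \<Rightarrow> nat \<Rightarrow> real \<Rightarrow> real \<Rightarrow> ('a \<Rightarrow> 'b \<Rightarrow> real) \<Rightarrow> (nat \<Rightarrow> 'a \<Rightarrow> 'b \<Rightarrow> real)
   \<Rightarrow> ('a \<Rightarrow> 'b \<Rightarrow> 'a) \<Rightarrow> (nat \<Rightarrow> 'a \<Rightarrow> 'b \<Rightarrow> 'a) \<Rightarrow> 'a \<Rightarrow> (nat \<Rightarrow> 'b) \<Rightarrow> nat \<Rightarrow> 'a \<times> (nat \<Rightarrow> real)" where
  "slpmm C p \<sigma> \<alpha> F G v0 v x0 xis 0 = (x0, \<lambda>_. 0)"
| "slpmm C p \<sigma> \<alpha> F G v0 v x0 xis (Suc k) =
     slpmm_step C p \<sigma> \<alpha> F G v0 v (slpmm C p \<sigma> \<alpha> F G v0 v x0 xis k) (xis k)"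

end

theory Submission
  imports Defs
begin

(* Each SLPMM step minimises a convex function plus alpha/2 |y - x^k|^2 over C, so the minimiser
   x^(k+1) has quadratic growth; testing it against x^k and replacing the squared positive parts
   of the penalty by their tangents gives alpha |x^(k+1) - x^k| <= kappa_f + sqrt p kappa_g
   (|lambda^k| + sigma nu_g).  The multiplier update gives
   lambda_i^(k+1) >= lambda_i^k + sigma G_i(x^k, xi^k) - sigma kappa_g |x^(k+1) - x^k|, which
   telescopes into a pathwise bound on the average of G_i(x^k, xi^k).  In expectation, x^k is a
   function of xi^0, ..., xi^(k-1) and hence independent of xi^k, so E[G_i(x^k, xi^k)] = E[g_i(x^k)],
   and Jensen's inequality for the convex g_i passes to the averaged iterate. *)

section \<open>Measurable selection of unique minimisers\<close>

lemma continuous_on_dense_approx: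
  fixes f :: "'a::metric_space \<Rightarrow> real"
  assumes "continuous_on S f" "D \<subseteq> S" "S \<subseteq> closure D" "y \<in> S" "e > 0"
  shows "\<exists>z\<in>D. f z < f y + e"
proof -
  obtain d where "d > 0" and d: "\<forall>z\<in>S. dist z y < d \<longrightarrow> dist (f z) (f y) < e"
    using assms(1,4,5) unfolding continuous_on_iff by metis
  obtain z where "z \<in> D" "dist z y < d"
    using assms(3,4) \<open>d > 0\<close> closure_approachable by blast
  with d assms(2) show ?thesis by (force simp: dist_real_def)
qed

lemma unique_argmin_in_closed_iff:
  fixes f :: "'a::metric_space \<Rightarrow> real"
  assumes C: "compact C" and f: "continuous_on C f" and K: "closed K"
    and DC: "DC \<subseteq> C" "C \<subseteq> closure DC" and DK: "DK \<subseteq> C \<inter> K" "C \<inter> K \<subseteq> closure DK"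
    and m: "m \<in> C" "\<forall>z\<in>C. f m \<le> f z"
    and uniq: "\<And>y. y \<in> C \<Longrightarrow> \<forall>z\<in>C. f y \<le> f z \<Longrightarrow> y = m"
  shows "m \<in> K \<longleftrightarrow> (\<forall>z\<in>DC. \<forall>n::nat. \<exists>y\<in>DK. f y \<le> f z + 1 / Suc n)"
proof
  assume "m \<in> K"
  show "\<forall>z\<in>DC. \<forall>n::nat. \<exists>y\<in>DK. f y \<le> f z + 1 / Suc n"
  proof (intro ballI allI)
    fix z n assume "z \<in> DC"
    obtain y where "y \<in> DK" "f y < f m + 1 / Suc n"
      using continuous_on_dense_approx[OF continuous_on_subset[OF f] DK, of m "1 / Suc n"] m \<open>m \<in> K\<close>
      by auto
    with m \<open>z \<in> DC\<close> DC show "\<exists>y\<in>DK. f y \<le> f z + 1 / Suc n" by force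
  qed
next
  assume approx: "\<forall>z\<in>DC. \<forall>n::nat. \<exists>y\<in>DK. f y \<le> f z + 1 / Suc n"
  have "DC \<noteq> {}" using DC m by auto
  then have "C \<inter> K \<noteq> {}" using approx DK by blast
  then obtain y0 where y0: "y0 \<in> C \<inter> K" "\<forall>y\<in>C \<inter> K. f y0 \<le> f y"
    using continuous_attains_inf[OF compact_Int_closed[OF C K]] continuous_on_subset[OF f] by blast
  have "f y0 \<le> f z" if "z \<in> C" for z
  proof (rule field_le_epsilon)
    fix e :: real assume "e > 0"
    obtain n :: nat where n: "1 / Suc n < e / 2"
      using reals_Archimedean[of "e / 2"] \<open>e > 0\<close> by (auto simp: inverse_eq_divide)
    obtain z' where "z' \<in> DC" "f z' < f z + e / 2"
      using continuous_on_dense_approx[OF f DC \<open>z \<in> C\<close>, of "e / 2"] \<open>e > 0\<close> by auto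
    moreover obtain y where "y \<in> DK" "f y \<le> f z' + 1 / Suc n" using approx \<open>z' \<in> DC\<close> by blast
    moreover have "f y0 \<le> f y" using y0 \<open>y \<in> DK\<close> DK by blast
    ultimately show "f y0 \<le> f z + e" using n by linarith
  qed
  then have "y0 = m" using uniq y0 by blast
  then show "m \<in> K" using y0 by blast
qed

lemma measurable_unique_argmin:
  fixes f :: "'m \<Rightarrow> 'a::{metric_space, second_countable_topology} \<Rightarrow> real"
  assumes C: "compact C" "C \<noteq> {}"
    and cont: "\<And>\<omega>. \<omega> \<in> space M \<Longrightarrow> continuous_on C (f \<omega>)"
    and meas: "\<And>z. z \<in> C \<Longrightarrow> (\<lambda>\<omega>. f \<omega> z) \<in> borel_measurable M"
    and uniq: "\<And>\<omega> y y'. \<omega> \<in> space M \<Longrightarrow> y \<in> C \<Longrightarrow> y' \<in> C \<Longrightarrow> \<forall>z\<in>C. f \<omega> y \<le> f \<omega> z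
      \<Longrightarrow> \<forall>z\<in>C. f \<omega> y' \<le> f \<omega> z \<Longrightarrow> y = y'"
  shows "(\<lambda>\<omega>. SOME y. y \<in> C \<and> (\<forall>z\<in>C. f \<omega> y \<le> f \<omega> z)) \<in> borel_measurable M"
    (is "?m \<in> _")
\<comment> \<open>Whether the minimiser avoids an open set is decided by countably many comparisons of f.\<close>
proof (rule borel_measurableI)
  have m: "?m \<omega> \<in> C \<and> (\<forall>z\<in>C. f \<omega> (?m \<omega>) \<le> f \<omega> z)" if "\<omega> \<in> space M" for \<omega>
    using continuous_attains_inf[OF C cont[OF that]] by (rule someI2_bex) blast
  obtain DC where DC: "countable DC" "DC \<subseteq> C" "C \<subseteq> closure DC" using separable by blast
  fix S :: "'a set" assume "open S"
  obtain DK where DK: "countable DK" "DK \<subseteq> C - S" "C - S \<subseteq> closure DK" using separable by blast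
  have "?m \<omega> \<in> - S \<longleftrightarrow> (\<forall>z\<in>DC. \<forall>n::nat. \<exists>y\<in>DK. f \<omega> y \<le> f \<omega> z + 1 / Suc n)"
    if "\<omega> \<in> space M" for \<omega>
    by (rule unique_argmin_in_closed_iff[OF C(1) cont[OF that]])
      (use DC DK m[OF that] uniq[OF that] \<open>open S\<close> in \<open>auto simp: Diff_eq\<close>)
  then have "?m \<omega> \<in> S \<longleftrightarrow> \<not> (\<forall>z\<in>DC. \<forall>n::nat. \<exists>y\<in>DK. f \<omega> y \<le> f \<omega> z + 1 / Suc n)"
    if "\<omega> \<in> space M" for \<omega>
    using that by blast
  then have "?m -` S \<inter> space M =
      space M - (\<Inter>z\<in>DC. \<Inter>n. \<Union>y\<in>DK. {\<omega>\<in>space M. f \<omega> y \<le> f \<omega> z + 1 / Suc n})"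
    by (auto simp del: of_nat_Suc; meson)
  also have "\<dots> \<in> sets M"
  proof (intro sets.Diff sets.top sets.countable_INT' sets.countable_UN' DC(1) DK(1) image_subsetI)
    fix z y n assume "z \<in> DC" "y \<in> DK"
    then have [measurable]: "(\<lambda>\<omega>. f \<omega> z) \<in> borel_measurable M" "(\<lambda>\<omega>. f \<omega> y) \<in> borel_measurable M"
      using meas DC DK by auto
    show "{\<omega>\<in>space M. f \<omega> y \<le> f \<omega> z + 1 / Suc n} \<in> sets M" by measurable
  qed (use C DC in auto)
  finally show "?m -` S \<inter> space M \<in> sets M" .
qed

section \<open>Convexity and quadratic growth\<close>

lemma pos_part_sq_tangent:
  fixes a b :: real
  shows "(max a 0)\<^sup>2 + 2 * b * max a 0 \<le> (max (a + b) 0)\<^sup>2"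
proof (cases "a \<le> 0")
  case False
  have "a\<^sup>2 + 2 * b * a \<le> (max (a + b) 0)\<^sup>2"
  proof (cases "a + b \<le> 0")
    case True
    then have "a * (a + 2 * b) \<le> 0" using False by (intro mult_nonneg_nonpos) auto
    then show ?thesis using True by (simp add: power2_eq_square algebra_simps)
  next
    case False
    then show ?thesis by (simp add: power2_eq_square algebra_simps)
  qed
  with False show ?thesis by simp
qed simp

lemma convex_on_pos_part_sq: "convex_on UNIV (\<lambda>t::real. (max t 0)\<^sup>2)"
proof (rule convex_onI)
  fix t x y :: real assume t: "0 < t" "t < 1"
  have "(1 - t) * x + t * y \<le> (1 - t) * max x 0 + t * max y 0"
    using t by (intro add_mono mult_left_mono) auto
  then have "max ((1 - t) *\<^sub>R x + t *\<^sub>R y) 0 \<le> (1 - t) * max x 0 + t * max y 0"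
    using t by (simp add: max.boundedI)
  then have "(max ((1 - t) *\<^sub>R x + t *\<^sub>R y) 0)\<^sup>2 \<le> ((1 - t) * max x 0 + t * max y 0)\<^sup>2"
    by (rule power_mono) simp
  also have "\<dots> \<le> (1 - t) * (max x 0)\<^sup>2 + t * (max y 0)\<^sup>2"
    using convex_onD[OF convex_power2, of t "max x 0" "max y 0"] t by simp
  finally show "(max ((1 - t) *\<^sub>R x + t *\<^sub>R y) 0)\<^sup>2 \<le> (1 - t) * (max x 0)\<^sup>2 + t * (max y 0)\<^sup>2" .
qed simp

lemma nonpos_if_le_scaled:
  fixes X B :: real
  assumes "\<And>t. 0 < t \<Longrightarrow> t \<le> 1 \<Longrightarrow> X \<le> t * B"
  shows "X \<le> 0"
proof (rule field_le_epsilon)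
  fix e :: real assume "e > 0"
  define t where "t = min 1 (e / (\<bar>B\<bar> + 1))"
  have t: "0 < t" "t \<le> 1" "t \<le> e / (\<bar>B\<bar> + 1)" using \<open>e > 0\<close> by (auto simp: t_def)
  have "X \<le> t * \<bar>B\<bar>" using assms[OF t(1,2)] t(1) by (smt (verit) abs_ge_self mult_left_mono)
  also have "\<dots> \<le> e / (\<bar>B\<bar> + 1) * \<bar>B\<bar>" using t(3) by (rule mult_right_mono) simp
  also have "\<dots> \<le> e" using \<open>e > 0\<close> by (simp add: field_simps)
  finally show "X \<le> 0 + e" by simp
qed

lemma proximal_argmin_growth:
  fixes q :: "'a::real_inner \<Rightarrow> real"
  assumes q: "convex_on C q" and "x \<in> C" "y \<in> C"
    and min: "\<And>z. z \<in> C \<Longrightarrow> q x + a / 2 * (norm (x - c))\<^sup>2 \<le> q z + a / 2 * (norm (z - c))\<^sup>2"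
  shows "q x + a / 2 * (norm (x - c))\<^sup>2 + a / 2 * (norm (y - x))\<^sup>2 \<le> q y + a / 2 * (norm (y - c))\<^sup>2"
proof -
  define I where "I = inner (x - c) (y - x)"
  define N where "N = (norm (y - x))\<^sup>2"
  have expand: "(norm (x - c + t *\<^sub>R (y - x)))\<^sup>2 = (norm (x - c))\<^sup>2 + 2 * t * I + t\<^sup>2 * N" for t
    unfolding I_def N_def power2_norm_eq_inner
    by (simp add: inner_add_left inner_add_right inner_commute power2_eq_square algebra_simps)
  have "- (q y - q x + a * I) \<le> 0"
  proof (rule nonpos_if_le_scaled)
    fix t :: real assume t: "0 < t" "t \<le> 1"
    define z where "z = x + t *\<^sub>R (y - x)"
    have z_alt: "z = (1 - t) *\<^sub>R x + t *\<^sub>R y" by (simp add: z_def algebra_simps)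
    have "z \<in> C" using convex_on_imp_convex[OF q] \<open>x \<in> C\<close> \<open>y \<in> C\<close> t
      unfolding z_alt convex_alt by simp
    have qz: "q z \<le> (1 - t) * q x + t * q y"
      unfolding z_alt using convex_onD[OF q, of t x y] t \<open>x \<in> C\<close> \<open>y \<in> C\<close> by simp
    have "(norm (z - c))\<^sup>2 = (norm (x - c))\<^sup>2 + 2 * t * I + t\<^sup>2 * N"
      using expand[of t] by (simp add: z_def algebra_simps)
    then have "q x + a / 2 * (norm (x - c))\<^sup>2 \<le> q z + a / 2 * ((norm (x - c))\<^sup>2 + 2 * t * I + t\<^sup>2 * N)"
      using min[OF \<open>z \<in> C\<close>] by simp
    with qz have "q x + a / 2 * (norm (x - c))\<^sup>2
        \<le> (1 - t) * q x + t * q y + a / 2 * ((norm (x - c))\<^sup>2 + 2 * t * I + t\<^sup>2 * N)"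
      by linarith
    then have "t * (- (q y - q x + a * I)) \<le> t * (t * (a / 2 * N))"
      by (simp add: power2_eq_square algebra_simps)
    then show "- (q y - q x + a * I) \<le> t * (a / 2 * N)"
      using t(1) by simp
  qed
  moreover have "(norm (y - c))\<^sup>2 = (norm (x - c))\<^sup>2 + 2 * I + N"
    using expand[of 1] by simp
  ultimately show ?thesis unfolding N_def[symmetric] by (simp add: algebra_simps)
qed

lemma convex_average_mem:
  assumes "convex C" "K > 0" "\<And>k. k < K \<Longrightarrow> x k \<in> C"
  shows "(1 / real K) *\<^sub>R (\<Sum>k<K. x k) \<in> C"
  using convex_sum[OF _ assms(1), of "{..<K}" "\<lambda>_. 1 / real K" x] assms(2,3)
  by (simp add: scaleR_sum_right)

lemma convex_on_average_le:
  assumes "convex_on C f" "K > 0" "\<And>k. k < K \<Longrightarrow> x k \<in> C"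
  shows "f ((1 / real K) *\<^sub>R (\<Sum>k<K. x k)) \<le> (1 / real K) * (\<Sum>k<K. f (x k))"
  using convex_on_sum[OF _ _ assms(1), of "{..<K}" "\<lambda>_. 1 / real K" x] assms(2,3)
  by (simp add: scaleR_sum_right sum_distrib_left lessThan_empty_iff)


lemma sum_abs_le_sqrt_card_mult:
  fixes u :: "nat \<Rightarrow> real"
  shows "(\<Sum>i<p. \<bar>u i\<bar>) \<le> sqrt (real p) * sqrt (\<Sum>i<p. (u i)\<^sup>2)"
proof -
  have "(\<Sum>i<p. 1 * \<bar>u i\<bar>)\<^sup>2 \<le> (\<Sum>i<p. 1\<^sup>2) * (\<Sum>i<p. \<bar>u i\<bar>\<^sup>2)"
    by (rule Cauchy_Schwarz_ineq_sum)
  then have "sqrt ((\<Sum>i<p. \<bar>u i\<bar>)\<^sup>2) \<le> sqrt (real p * (\<Sum>i<p. (u i)\<^sup>2))"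
    by (intro real_sqrt_le_mono) simp
  then show ?thesis by (simp add: real_sqrt_mult sum_nonneg)
qed

lemma vnorm_nonneg: "0 \<le> vnorm p lam"
  by (simp add: vnorm_def sum_nonneg)

lemma vnorm_le:
  assumes "\<And>i. i < p \<Longrightarrow> \<bar>lam i\<bar> \<le> B"
  shows "vnorm p lam \<le> sqrt (real p) * B"
proof (cases "p = 0")
  case False
  then have "0 \<le> B" using assms[of 0] by simp
  have "(\<Sum>i<p. (lam i)\<^sup>2) \<le> (\<Sum>i<p. B\<^sup>2)"
    using assms by (intro sum_mono) (metis abs_le_square_iff abs_of_nonneg \<open>0 \<le> B\<close> lessThan_iff)
  then have "vnorm p lam \<le> sqrt (real p * B\<^sup>2)"
    unfolding vnorm_def by (intro real_sqrt_le_mono) simp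
  then show ?thesis using \<open>0 \<le> B\<close> by (simp add: real_sqrt_mult)
qed (simp add: vnorm_def)

lemma abs_inner_le_bound:
  fixes u d :: "'a::real_inner"
  shows "norm u \<le> k \<Longrightarrow> \<bar>inner u d\<bar> \<le> k * norm d"
  by (meson Cauchy_Schwarz_ineq2 mult_right_mono norm_ge_zero order.trans)


lemma sum_inner_pos_part_lower_bound:
  fixes u :: "nat \<Rightarrow> 'a::real_inner"
  assumes "\<And>i. i < p \<Longrightarrow> norm (u i) \<le> k"
  shows "- (\<Sum>i<p. inner (u i) d * max (a i) 0) \<le> norm d * (k * (\<Sum>i<p. \<bar>a i\<bar>))"
proof -
  have "- (inner (u i) d * max (a i) 0) \<le> norm d * (k * \<bar>a i\<bar>)" if "i < p" for i
  proof -
    have "- (inner (u i) d * max (a i) 0) \<le> \<bar>inner (u i) d\<bar> * max (a i) 0"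
      using mult_right_mono[OF abs_ge_minus_self[of "inner (u i) d"], of "max (a i) 0"] by simp
    also have "\<dots> \<le> (k * norm d) * \<bar>a i\<bar>"
      using abs_inner_le_bound[OF assms[OF that], of d] by (intro mult_mono) auto
    finally show ?thesis by (simp add: algebra_simps)
  qed
  then have "(\<Sum>i<p. - (inner (u i) d * max (a i) 0)) \<le> (\<Sum>i<p. norm d * (k * \<bar>a i\<bar>))"
    by (intro sum_mono) auto
  then show ?thesis by (simp add: sum_negf sum_distrib_left)
qed

section \<open>Independence and expectations of convex functions\<close>

lemma (in prob_space) integral_indep_var_freeze:
  fixes H :: "'y \<Rightarrow> 'y \<Rightarrow> real"
  assumes indep: "indep_var MY Y MZ Z"
    and H: "(\<lambda>(y, z). H y z) \<in> borel_measurable (MY \<Otimes>\<^sub>M MZ)"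
    and int: "integrable M (\<lambda>\<omega>. H (Y \<omega>) (Z \<omega>))"
  shows "(\<integral>\<omega>. H (Y \<omega>) (Z \<omega>) \<partial>M) = (\<integral>\<omega>. (\<integral>\<omega>'. H (Y \<omega>) (Z \<omega>') \<partial>M) \<partial>M)"
proof -
  have Y[measurable]: "Y \<in> measurable M MY" and Z[measurable]: "Z \<in> measurable M MZ"
    using indep_var_rv1[OF indep] indep_var_rv2[OF indep] by auto
  note [measurable] = H
  have prod: "distr M MY Y \<Otimes>\<^sub>M distr M MZ Z = distr M (MY \<Otimes>\<^sub>M MZ) (\<lambda>\<omega>. (Y \<omega>, Z \<omega>))"
    using indep_var_distribution_eq[THEN iffD1, OF indep] by blast
  interpret PY: prob_space "distr M MY Y" by (rule prob_space_distr) simp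
  interpret PZ: prob_space "distr M MZ Z" by (rule prob_space_distr) simp
  interpret PYZ: pair_prob_space "distr M MY Y" "distr M MZ Z" ..
  have int': "integrable (distr M MY Y \<Otimes>\<^sub>M distr M MZ Z) (\<lambda>(y, z). H y z)"
    unfolding prod using integrable_distr_eq[OF measurable_Pair[OF Y Z] H] int by simp
  have "(\<integral>\<omega>. H (Y \<omega>) (Z \<omega>) \<partial>M) = (\<integral>(y, z). H y z \<partial>(distr M MY Y \<Otimes>\<^sub>M distr M MZ Z))"
    unfolding prod by (subst integral_distr) auto
  also have "\<dots> = (\<integral>y. (\<integral>z. H y z \<partial>distr M MZ Z) \<partial>distr M MY Y)"
    using PYZ.integral_fst'[OF int'] by simp
  also have "\<dots> = (\<integral>y. (\<integral>\<omega>'. H y (Z \<omega>') \<partial>M) \<partial>distr M MY Y)"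
  proof (rule Bochner_Integration.integral_cong[OF refl])
    fix y assume "y \<in> space (distr M MY Y)"
    then have [measurable]: "y \<in> space MY" by simp
    show "(\<integral>z. H y z \<partial>distr M MZ Z) = (\<integral>\<omega>'. H y (Z \<omega>') \<partial>M)"
      by (rule integral_distr) measurable
  qed
  also have "\<dots> = (\<integral>\<omega>. (\<integral>\<omega>'. H (Y \<omega>) (Z \<omega>') \<partial>M) \<partial>M)"
    by (intro integral_distr Y borel_measurable_lebesgue_integral) measurable
  finally show ?thesis .
qed

lemma convex_on_integral:
  fixes H :: "'a::real_vector \<Rightarrow> 'm \<Rightarrow> real"
  assumes "convex C" and int: "\<And>x. x \<in> C \<Longrightarrow> integrable M (H x)"
    and cvx: "AE \<omega> in M. convex_on C (\<lambda>x. H x \<omega>)"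
  shows "convex_on C (\<lambda>x. \<integral>\<omega>. H x \<omega> \<partial>M)"
proof (rule convex_onI[OF _ \<open>convex C\<close>])
  fix t :: real and x y assume t: "0 < t" "t < 1" and xy: "x \<in> C" "y \<in> C"
  then have "(1 - t) *\<^sub>R x + t *\<^sub>R y \<in> C" using \<open>convex C\<close> by (simp add: convex_alt)
  then have "(\<integral>\<omega>. H ((1 - t) *\<^sub>R x + t *\<^sub>R y) \<omega> \<partial>M) \<le> (\<integral>\<omega>. (1 - t) * H x \<omega> + t * H y \<omega> \<partial>M)"
    using cvx t xy int by (intro integral_mono_AE) (auto elim!: AE_mp intro!: convex_onD)
  also have "\<dots> = (1 - t) * (\<integral>\<omega>. H x \<omega> \<partial>M) + t * (\<integral>\<omega>. H y \<omega> \<partial>M)"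
    using int xy by simp
  finally show "(\<integral>\<omega>. H ((1 - t) *\<^sub>R x + t *\<^sub>R y) \<omega> \<partial>M)
      \<le> (1 - t) * (\<integral>\<omega>. H x \<omega> \<partial>M) + t * (\<integral>\<omega>. H y \<omega> \<partial>M)" .
qed


section \<open>The SLPMM iteration\<close>

lemma continuous_on_slpmm_L: "continuous_on C (\<lambda>y. slpmm_L p \<sigma> F G v0 v xk s y lam)"
  unfolding slpmm_L_def by (intro continuous_intros)

lemma convex_on_slpmm_L:
  assumes "\<sigma> > 0"
  shows "convex_on UNIV (\<lambda>y. slpmm_L p \<sigma> F G v0 v xk s y lam)"
proof (rule convex_onI)
  fix t :: real and x y :: 'a assume t: "0 < t" "t < 1"
  define c where "c = 1 / (2 * \<sigma>)"
  define A where "A i z = lam i + \<sigma> * (G i xk s + inner (v i xk s) (z - xk))" for i z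
  define S where "S z = (\<Sum>i<p. (max (A i z) 0)\<^sup>2)" for z
  define I where "I z = inner (v0 xk s) (z - xk)" for z
  define z where "z = (1 - t) *\<^sub>R x + t *\<^sub>R y"
  have L: "slpmm_L p \<sigma> F G v0 v xk s w lam = F xk s + I w + c * (S w - (vnorm p lam)\<^sup>2)" for w
    by (simp add: slpmm_L_def c_def S_def A_def I_def)
  have zx: "z - xk = (1 - t) *\<^sub>R (x - xk) + t *\<^sub>R (y - xk)" by (simp add: z_def algebra_simps)
  have Iz: "I z = (1 - t) * I x + t * I y" by (simp add: I_def zx inner_add_right)
  have "A i z = (1 - t) * A i x + t * A i y" for i
    by (simp add: A_def zx inner_add_right algebra_simps)
  then have "S z \<le> (\<Sum>i<p. (1 - t) * (max (A i x) 0)\<^sup>2 + t * (max (A i y) 0)\<^sup>2)"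
    unfolding S_def using convex_onD[OF convex_on_pos_part_sq] t by (intro sum_mono) simp
  also have "\<dots> = (1 - t) * S x + t * S y" by (simp add: S_def sum.distrib sum_distrib_left)
  finally have "c * S z \<le> c * ((1 - t) * S x + t * S y)"
    using assms by (intro mult_left_mono) (auto simp: c_def)
  moreover have "(1 - t) * slpmm_L p \<sigma> F G v0 v xk s x lam + t * slpmm_L p \<sigma> F G v0 v xk s y lam
      = F xk s + I z + c * ((1 - t) * S x + t * S y) - c * (vnorm p lam)\<^sup>2"
    unfolding L Iz by (simp add: algebra_simps)
  ultimately show "slpmm_L p \<sigma> F G v0 v xk s z lam \<le>
      (1 - t) * slpmm_L p \<sigma> F G v0 v xk s x lam + t * slpmm_L p \<sigma> F G v0 v xk s y lam"
    unfolding L by (simp add: algebra_simps)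
qed simp

locale slpmm_problem =
  fixes C :: "'a::euclidean_space set" and p :: nat and \<sigma> \<alpha> :: real
    and F :: "'a \<Rightarrow> 'b \<Rightarrow> real" and G :: "nat \<Rightarrow> 'a \<Rightarrow> 'b \<Rightarrow> real"
    and v0 :: "'a \<Rightarrow> 'b \<Rightarrow> 'a" and v :: "nat \<Rightarrow> 'a \<Rightarrow> 'b \<Rightarrow> 'a" and x0 :: 'a
  assumes compact: "compact C" and convex: "convex C" and x0_in: "x0 \<in> C"
    and \<sigma>_pos: "\<sigma> > 0" and \<alpha>_pos: "\<alpha> > 0"
begin

lemma nonempty: "C \<noteq> {}"
  using x0_in by auto

abbreviation step :: "'a \<times> (nat \<Rightarrow> real) \<Rightarrow> 'b \<Rightarrow> 'a \<times> (nat \<Rightarrow> real)" where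
  "step \<equiv> slpmm_step C p \<sigma> \<alpha> F G v0 v"

definition prox :: "'a \<Rightarrow> 'b \<Rightarrow> (nat \<Rightarrow> real) \<Rightarrow> 'a \<Rightarrow> real" where
  "prox xk s lam y = slpmm_L p \<sigma> F G v0 v xk s y lam + \<alpha> / 2 * (norm (y - xk))\<^sup>2"

lemma step_fst:
  "fst (step st s) = (SOME y. y \<in> C \<and> (\<forall>z\<in>C. prox (fst st) s (snd st) y \<le> prox (fst st) s (snd st) z))"
  by (simp add: slpmm_step_def Let_def prox_def)

lemma step_snd: "snd (step st s) i = (if i < p then
    max (snd st i + \<sigma> * (G i (fst st) s + inner (v i (fst st) s) (fst (step st s) - fst st))) 0 else 0)"
  by (simp add: slpmm_step_def Let_def)

lemma continuous_on_prox: "continuous_on C (prox xk s lam)"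
  unfolding prox_def by (intro continuous_intros continuous_on_slpmm_L)

lemma prox_argmin_growth:
  assumes "x \<in> C" "y \<in> C" "\<forall>z\<in>C. prox xk s lam x \<le> prox xk s lam z"
  shows "prox xk s lam x + \<alpha> / 2 * (norm (y - x))\<^sup>2 \<le> prox xk s lam y"
proof -
  have "convex_on C (\<lambda>y. slpmm_L p \<sigma> F G v0 v xk s y lam)"
    using convex_on_subset[OF convex_on_slpmm_L[OF \<sigma>_pos] _ convex] by simp
  from proximal_argmin_growth[OF this assms(1,2), of \<alpha> xk] assms(3) show ?thesis
    by (simp add: prox_def)
qed

lemma prox_argmin_unique:
  assumes "x \<in> C" "y \<in> C"
    and "\<forall>z\<in>C. prox xk s lam x \<le> prox xk s lam z" "\<forall>z\<in>C. prox xk s lam y \<le> prox xk s lam z"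
  shows "x = y"
proof -
  have "prox xk s lam x + \<alpha> / 2 * (norm (y - x))\<^sup>2 \<le> prox xk s lam x"
    using prox_argmin_growth[OF assms(1,2,3)] assms(1,4) by fastforce
  then have "(norm (y - x))\<^sup>2 \<le> 0" using \<alpha>_pos by (simp add: mult_le_0_iff)
  then show ?thesis by simp
qed

lemma step_argmin:
  "fst (step st s) \<in> C \<and> (\<forall>z\<in>C. prox (fst st) s (snd st) (fst (step st s)) \<le> prox (fst st) s (snd st) z)"
  unfolding step_fst
  using continuous_attains_inf[OF compact nonempty continuous_on_prox] by (rule someI2_bex) blast

lemma step_first_order:
  fixes st :: "'a \<times> (nat \<Rightarrow> real)" and s :: 'b
  assumes "fst st \<in> C"
  defines "d \<equiv> fst (step st s) - fst st"
  shows "inner (v0 (fst st) s) d + (\<Sum>i<p. inner (v i (fst st) s) d * max (snd st i + \<sigma> * G i (fst st) s) 0)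
    + \<alpha> * (norm d)\<^sup>2 \<le> 0"
\<comment> \<open>Quadratic growth tested against x^k; the penalty is linearised by the tangents of (max t 0)^2.\<close>
proof -
  define xk lam where "xk = fst st" and "lam = snd st"
  define a c where "a i = lam i + \<sigma> * G i xk s" and "c i = inner (v i xk s) d" for i
  have "prox xk s lam (fst (step st s)) + \<alpha> / 2 * (norm d)\<^sup>2 \<le> prox xk s lam xk"
    using prox_argmin_growth[of _ xk] step_argmin assms(1) unfolding xk_def lam_def d_def
    by (metis norm_minus_commute)
  then have "inner (v0 xk s) d + 1 / (2 * \<sigma>) * (\<Sum>i<p. (max (a i + \<sigma> * c i) 0)\<^sup>2 - (max (a i) 0)\<^sup>2)
      + \<alpha> * (norm d)\<^sup>2 \<le> 0"
    by (simp add: prox_def slpmm_L_def a_def c_def d_def xk_def sum_subtractf algebra_simps)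
  moreover have "(\<Sum>i<p. c i * max (a i) 0) \<le> 1 / (2 * \<sigma>) * (\<Sum>i<p. (max (a i + \<sigma> * c i) 0)\<^sup>2 - (max (a i) 0)\<^sup>2)"
    using pos_part_sq_tangent[of "a _" "\<sigma> * c _"] \<sigma>_pos
    by (simp add: sum_distrib_left field_simps sum_mono)
  ultimately show ?thesis by (simp add: a_def c_def xk_def lam_def)
qed

abbreviation iter :: "(nat \<Rightarrow> 'b) \<Rightarrow> nat \<Rightarrow> 'a \<times> (nat \<Rightarrow> real)" where
  "iter \<equiv> slpmm C p \<sigma> \<alpha> F G v0 v x0"

lemma iter_in_C: "fst (iter xs k) \<in> C"
  using x0_in step_argmin by (induction k) auto

lemma iter_prefix_cong: "(\<And>j. j < k \<Longrightarrow> xs j = ys j) \<Longrightarrow> iter xs k = iter ys k"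
  by (induction k) auto

end

locale slpmm_bounded = slpmm_problem +
  fixes \<Xi> :: "'b set" and \<nu>g \<kappa>f \<kappa>g :: real
  assumes G_bound: "\<And>x s. x \<in> C \<Longrightarrow> s \<in> \<Xi> \<Longrightarrow> sqrt (\<Sum>i<p. (G i x s)\<^sup>2) \<le> \<nu>g"
    and v0_bound: "\<And>x s. x \<in> C \<Longrightarrow> s \<in> \<Xi> \<Longrightarrow> norm (v0 x s) \<le> \<kappa>f"
    and v_bound: "\<And>i x s. i < p \<Longrightarrow> x \<in> C \<Longrightarrow> s \<in> \<Xi> \<Longrightarrow> norm (v i x s) \<le> \<kappa>g"
begin

lemma G_abs_bound:
  assumes "i < p" "x \<in> C" "s \<in> \<Xi>"
  shows "\<bar>G i x s\<bar> \<le> \<nu>g"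
proof -
  have "\<bar>G i x s\<bar> = sqrt ((G i x s)\<^sup>2)" by simp
  also have "\<dots> \<le> sqrt (\<Sum>j<p. (G j x s)\<^sup>2)"
    using assms(1) by (intro real_sqrt_le_mono member_le_sum) auto
  finally show ?thesis using G_bound[OF assms(2,3)] by simp
qed

lemma sum_abs_multiplier_bound:
  assumes "x \<in> C" "s \<in> \<Xi>"
  shows "(\<Sum>i<p. \<bar>lam i + \<sigma> * G i x s\<bar>) \<le> sqrt (real p) * (vnorm p lam + \<sigma> * \<nu>g)"
proof -
  have "(\<Sum>i<p. \<bar>lam i + \<sigma> * G i x s\<bar>) \<le> (\<Sum>i<p. \<bar>lam i\<bar> + \<sigma> * \<bar>G i x s\<bar>)"
    using \<sigma>_pos by (intro sum_mono) (auto simp: abs_mult intro: order.trans[OF abs_triangle_ineq])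
  also have "\<dots> = (\<Sum>i<p. \<bar>lam i\<bar>) + \<sigma> * (\<Sum>i<p. \<bar>G i x s\<bar>)"
    by (simp add: sum.distrib sum_distrib_left)
  also have "\<dots> \<le> sqrt (real p) * vnorm p lam + \<sigma> * (sqrt (real p) * \<nu>g)"
  proof (intro add_mono mult_left_mono)
    show "(\<Sum>i<p. \<bar>lam i\<bar>) \<le> sqrt (real p) * vnorm p lam"
      unfolding vnorm_def by (rule sum_abs_le_sqrt_card_mult)
    show "(\<Sum>i<p. \<bar>G i x s\<bar>) \<le> sqrt (real p) * \<nu>g"
      using sum_abs_le_sqrt_card_mult[of "\<lambda>i. G i x s" p] mult_left_mono[OF G_bound[OF assms]]
      by (meson order.trans real_sqrt_ge_zero of_nat_0_le_iff)
  qed (use \<sigma>_pos in simp)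
  finally show ?thesis by (simp add: algebra_simps)
qed

lemma bound_constants_nonneg:
  assumes "x \<in> C" "s \<in> \<Xi>"
  shows "0 \<le> \<kappa>f" "0 \<le> \<nu>g" "0 \<le> sqrt (real p) * \<kappa>g"
proof -
  show "0 \<le> \<kappa>f" using order.trans[OF norm_ge_zero v0_bound[OF assms]] .
  show "0 \<le> \<nu>g" using order.trans[OF real_sqrt_ge_zero G_bound[OF assms]] by (simp add: sum_nonneg)
  show "0 \<le> sqrt (real p) * \<kappa>g"
    using v_bound[of 0, OF _ assms]
    by (cases "p = 0") (auto intro!: mult_nonneg_nonneg intro: order.trans[OF norm_ge_zero])
qed

lemma step_displacement_bound:
  assumes "fst st \<in> C" "s \<in> \<Xi>"
  shows "\<alpha> * norm (fst (step st s) - fst st) \<le> \<kappa>f + sqrt (real p) * \<kappa>g * (vnorm p (snd st) + \<sigma> * \<nu>g)"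
proof -
  define xk lam d where "xk = fst st" and "lam = snd st" and "d = fst (step st s) - fst st"
  define a where "a i = lam i + \<sigma> * G i xk s" for i
  define B where "B = \<kappa>f + sqrt (real p) * \<kappa>g * (vnorm p lam + \<sigma> * \<nu>g)"
  have xk: "xk \<in> C" using assms(1) by (simp add: xk_def)
  note nonneg = bound_constants_nonneg[OF xk assms(2)]
  have "- (\<Sum>i<p. inner (v i xk s) d * max (a i) 0) \<le> norm d * (\<kappa>g * (\<Sum>i<p. \<bar>a i\<bar>))"
    using v_bound[OF _ xk assms(2)] by (rule sum_inner_pos_part_lower_bound)
  also have "\<dots> \<le> norm d * (sqrt (real p) * \<kappa>g * (vnorm p lam + \<sigma> * \<nu>g))"
  proof (cases "p = 0")
    case False
    then have "\<kappa>g \<ge> 0" using nonneg(3) by (simp add: zero_le_mult_iff)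
    from mult_left_mono[OF sum_abs_multiplier_bound[OF xk assms(2), of lam] this]
    show ?thesis by (intro mult_left_mono) (simp_all add: a_def mult.assoc mult.left_commute)
  qed simp
  finally have "\<alpha> * (norm d)\<^sup>2 \<le> norm d * B"
    using step_first_order[OF assms(1), of s] abs_inner_le_bound[OF v0_bound[OF xk assms(2)], of d]
    unfolding B_def by (simp add: xk_def lam_def d_def a_def algebra_simps)
  moreover have "0 \<le> B" unfolding B_def using nonneg vnorm_nonneg[of p lam] \<sigma>_pos by simp
  ultimately show ?thesis
    by (cases "norm d = 0") (auto simp: power2_eq_square B_def d_def xk_def lam_def intro: mult_left_le_imp_le)
qed

lemma step_multiplier_lower_bound:
  assumes "i < p" "fst st \<in> C" "s \<in> \<Xi>"
  shows "snd st i + \<sigma> * G i (fst st) s - \<sigma> * \<kappa>g * norm (fst (step st s) - fst st) \<le> snd (step st s) i"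
proof -
  have "- (\<kappa>g * norm (fst (step st s) - fst st)) \<le> inner (v i (fst st) s) (fst (step st s) - fst st)"
    using abs_inner_le_bound[OF v_bound[OF assms], of "fst (step st s) - fst st"] by linarith
  then show ?thesis
    using mult_left_mono[OF _ less_imp_le[OF \<sigma>_pos]] assms(1)
    by (fastforce simp: step_snd algebra_simps)
qed

lemma step_multiplier_abs_increment:
  assumes "i < p" "fst st \<in> C" "s \<in> \<Xi>"
  shows "\<bar>snd (step st s) i\<bar> \<le> \<bar>snd st i\<bar> + \<sigma> * (\<nu>g + \<kappa>g * diameter C)"
proof -
  define d where "d = fst (step st s) - fst st"
  have "\<kappa>g \<ge> 0" using v_bound[OF assms] by (meson norm_ge_zero order.trans)
  have "norm d \<le> diameter C"
    using diameter_bounded_bound[OF compact_imp_bounded[OF compact] conjunct1[OF step_argmin] assms(2)]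
    by (simp add: d_def dist_norm)
  then have "\<bar>inner (v i (fst st) s) d\<bar> \<le> \<kappa>g * diameter C"
    using abs_inner_le_bound[OF v_bound[OF assms], of d] mult_left_mono[OF _ \<open>\<kappa>g \<ge> 0\<close>] by fastforce
  moreover have "\<bar>G i (fst st) s\<bar> \<le> \<nu>g" using G_abs_bound[OF assms] .
  ultimately have "\<bar>G i (fst st) s + inner (v i (fst st) s) d\<bar> \<le> \<nu>g + \<kappa>g * diameter C" by linarith
  then have "\<bar>\<sigma> * (G i (fst st) s + inner (v i (fst st) s) d)\<bar> \<le> \<sigma> * (\<nu>g + \<kappa>g * diameter C)"
    using \<sigma>_pos by (simp add: abs_mult)
  then have "\<bar>snd st i + \<sigma> * (G i (fst st) s + inner (v i (fst st) s) d)\<bar>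
      \<le> \<bar>snd st i\<bar> + \<sigma> * (\<nu>g + \<kappa>g * diameter C)"
    by (smt (verit) abs_triangle_ineq)
  then show ?thesis using assms(1) by (auto simp: step_snd d_def[symmetric])
qed

lemma iter_multiplier_abs_bound:
  assumes "i < p" "\<And>k. xs k \<in> \<Xi>"
  shows "\<bar>snd (iter xs k) i\<bar> \<le> real k * (\<sigma> * (\<nu>g + \<kappa>g * diameter C))"
proof (induction k)
  case (Suc k)
  then show ?case
    using step_multiplier_abs_increment[OF assms(1) iter_in_C assms(2), of xs k k] by (simp add: algebra_simps)
qed simp

lemma iter_constraint_sum_bound:
  assumes "i < p" "\<And>k. xs k \<in> \<Xi>"
  shows "\<sigma> * (\<Sum>k<n. G i (fst (iter xs k)) (xs k))
    \<le> snd (iter xs n) i + \<sigma> * \<kappa>g * (\<Sum>k<n. norm (fst (iter xs (Suc k)) - fst (iter xs k)))"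
proof (induction n)
  case (Suc n)
  then show ?case
    using step_multiplier_lower_bound[OF assms(1) iter_in_C assms(2), of xs n n]
    by (simp add: algebra_simps)
qed simp

lemma iter_constraint_average_bound:
  assumes "i < p" "\<And>k. xs k \<in> \<Xi>" "K > 0"
  shows "(1 / real K) * (\<Sum>k<K. G i (fst (iter xs k)) (xs k))
    \<le> 1 / (\<sigma> * real K) * snd (iter xs K) i
      + \<kappa>g / \<alpha> * (\<kappa>f + sqrt (real p) * \<nu>g * \<kappa>g * \<sigma>)
      + sqrt (real p) * \<kappa>g\<^sup>2 / (\<alpha> * real K) * (\<Sum>k<K. vnorm p (snd (iter xs k)))"
proof -
  define D where "D k = norm (fst (iter xs (Suc k)) - fst (iter xs k))" for k
  define c1 where "c1 = \<kappa>g / \<alpha> * (\<kappa>f + sqrt (real p) * \<nu>g * \<kappa>g * \<sigma>)"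
  define c2 where "c2 = sqrt (real p) * \<kappa>g\<^sup>2 / \<alpha>"
  have "\<kappa>g \<ge> 0" using v_bound[OF assms(1) x0_in assms(2)[of 0]] by (meson norm_ge_zero order.trans)
  have "\<kappa>g * D k \<le> c1 + c2 * vnorm p (snd (iter xs k))" for k
  proof -
    have "\<alpha> * D k \<le> \<kappa>f + sqrt (real p) * \<kappa>g * (vnorm p (snd (iter xs k)) + \<sigma> * \<nu>g)"
      unfolding D_def using step_displacement_bound[OF iter_in_C assms(2)] by simp
    from mult_left_mono[OF this, of "\<kappa>g / \<alpha>"] \<open>\<kappa>g \<ge> 0\<close> \<alpha>_pos
    have "\<kappa>g * D k \<le> \<kappa>g / \<alpha> * (\<kappa>f + sqrt (real p) * \<kappa>g * (vnorm p (snd (iter xs k)) + \<sigma> * \<nu>g))"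
      by simp
    also have "\<dots> = c1 + c2 * vnorm p (snd (iter xs k))"
      using \<alpha>_pos by (simp add: c1_def c2_def field_simps power2_eq_square)
    finally show ?thesis .
  qed
  then have "(\<Sum>k<K. \<kappa>g * D k) \<le> (\<Sum>k<K. c1 + c2 * vnorm p (snd (iter xs k)))"
    by (intro sum_mono)
  also have "\<dots> = real K * c1 + c2 * (\<Sum>k<K. vnorm p (snd (iter xs k)))"
    by (simp add: sum.distrib sum_distrib_left)
  finally have "(\<Sum>k<K. \<kappa>g * D k) \<le> \<dots>" .
  then have "\<sigma> * (\<Sum>k<K. \<kappa>g * D k) \<le> \<sigma> * (real K * c1 + c2 * (\<Sum>k<K. vnorm p (snd (iter xs k))))"
    using \<sigma>_pos by simp
  moreover have "\<sigma> * \<kappa>g * (\<Sum>k<K. D k) = \<sigma> * (\<Sum>k<K. \<kappa>g * D k)"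
    by (simp add: sum_distrib_left mult.assoc)
  ultimately have "\<sigma> * (\<Sum>k<K. G i (fst (iter xs k)) (xs k))
      \<le> snd (iter xs K) i + \<sigma> * (real K * c1 + c2 * (\<Sum>k<K. vnorm p (snd (iter xs k))))"
    using iter_constraint_sum_bound[of i xs K, OF assms(1,2)] unfolding D_def by linarith
  then show ?thesis using \<sigma>_pos assms(3)
    by (simp add: c1_def c2_def field_simps)
qed

end

locale slpmm_measurable = slpmm_problem +
  fixes N :: "'b measure"
  assumes F_measurable: "(\<lambda>(x, s). F x s) \<in> borel_measurable (borel \<Otimes>\<^sub>M N)"
    and G_measurable: "\<And>i. i < p \<Longrightarrow> (\<lambda>(x, s). G i x s) \<in> borel_measurable (borel \<Otimes>\<^sub>M N)"
    and v0_measurable: "(\<lambda>(x, s). v0 x s) \<in> borel_measurable (borel \<Otimes>\<^sub>M N)"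
    and v_measurable: "\<And>i. i < p \<Longrightarrow> (\<lambda>(x, s). v i x s) \<in> borel_measurable (borel \<Otimes>\<^sub>M N)"
begin

lemma measurable_step:
  assumes X[measurable]: "(\<lambda>\<omega>. fst (st \<omega>)) \<in> borel_measurable M"
    and \<Lambda>[measurable]: "\<And>i. (\<lambda>\<omega>. snd (st \<omega>) i) \<in> borel_measurable M"
    and S[measurable]: "S \<in> measurable M N"
  shows "(\<lambda>\<omega>. fst (step (st \<omega>) (S \<omega>))) \<in> borel_measurable M"
    and "(\<lambda>\<omega>. snd (step (st \<omega>) (S \<omega>)) i) \<in> borel_measurable M"
proof -
  note [measurable] = F_measurable v0_measurable
  have [measurable]: "(\<lambda>\<omega>. G i (fst (st \<omega>)) (S \<omega>)) \<in> borel_measurable M"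
      "(\<lambda>\<omega>. v i (fst (st \<omega>)) (S \<omega>)) \<in> borel_measurable M" if "i < p" for i
    using G_measurable[OF that] v_measurable[OF that] by measurable
  define f where "f \<omega> = prox (fst (st \<omega>)) (S \<omega>) (snd (st \<omega>))" for \<omega>
  have fm: "(\<lambda>\<omega>. f \<omega> z) \<in> borel_measurable M" for z
    unfolding f_def prox_def slpmm_L_def vnorm_def
    by (intro borel_measurable_add borel_measurable_times borel_measurable_diff borel_measurable_sum
        borel_measurable_power borel_measurable_sqrt borel_measurable_max) measurable
  show fst_m: "(\<lambda>\<omega>. fst (step (st \<omega>) (S \<omega>))) \<in> borel_measurable M"
    unfolding step_fst f_def[symmetric]
  proof (rule measurable_unique_argmin[OF compact nonempty _ fm])
    show "continuous_on C (f \<omega>)" for \<omega> unfolding f_def by (rule continuous_on_prox)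
    show "y = y'" if "y \<in> C" "y' \<in> C" "\<forall>z\<in>C. f \<omega> y \<le> f \<omega> z" "\<forall>z\<in>C. f \<omega> y' \<le> f \<omega> z"
      for \<omega> y y' using prox_argmin_unique that unfolding f_def by blast
  qed
  show "(\<lambda>\<omega>. snd (step (st \<omega>) (S \<omega>)) i) \<in> borel_measurable M"
    by (cases "i < p") (use fst_m in \<open>simp_all add: step_snd\<close>)
qed

lemma measurable_iter:
  assumes "\<And>j. j < k \<Longrightarrow> (\<lambda>\<omega>. xs \<omega> j) \<in> measurable M N"
  shows "(\<lambda>\<omega>. fst (iter (xs \<omega>) k)) \<in> borel_measurable M
    \<and> (\<forall>i. (\<lambda>\<omega>. snd (iter (xs \<omega>) k) i) \<in> borel_measurable M)"
  using assms
proof (induction k)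
  case (Suc k)
  then show ?case using measurable_step[of "\<lambda>\<omega>. iter (xs \<omega>) k" M "\<lambda>\<omega>. xs \<omega> k"] by simp
qed simp

end

section \<open>Expected constraint violation\<close>

locale slpmm_stochastic =
  slpmm_bounded C p \<sigma> \<alpha> F G v0 v x0 \<Xi> \<nu>g \<kappa>f \<kappa>g + slpmm_measurable C p \<sigma> \<alpha> F G v0 v x0 N + prob_space M
  for C :: "'a::euclidean_space set" and p \<sigma> \<alpha> and F :: "'a \<Rightarrow> 'b \<Rightarrow> real" and G v0 v x0 \<Xi> \<nu>g \<kappa>f \<kappa>g
    and N :: "'b measure" and M :: "'w measure" +
  fixes \<xi> :: "nat \<Rightarrow> 'w \<Rightarrow> 'b"
  assumes indep: "indep_vars (\<lambda>_. N) \<xi> UNIV"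
    and ident: "\<And>k. distr M N (\<xi> k) = distr M N (\<xi> 0)"
    and support: "\<And>k. AE \<omega> in M. \<xi> k \<omega> \<in> \<Xi>"
    and G_convex: "\<And>i s. i < p \<Longrightarrow> s \<in> \<Xi> \<Longrightarrow> convex_on C (\<lambda>x. G i x s)"
begin

text \<open>The constraint functions g_i of the paper:\<close>

definition expected_G :: "nat \<Rightarrow> 'a \<Rightarrow> real" where
  "expected_G i x = (\<integral>\<omega>. G i x (\<xi> 0 \<omega>) \<partial>M)"

abbreviation X :: "nat \<Rightarrow> 'w \<Rightarrow> 'a" where
  "X k \<omega> \<equiv> fst (iter (\<lambda>j. \<xi> j \<omega>) k)"

abbreviation \<Lambda> :: "nat \<Rightarrow> 'w \<Rightarrow> nat \<Rightarrow> real" where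
  "\<Lambda> k \<omega> \<equiv> snd (iter (\<lambda>j. \<xi> j \<omega>) k)"

lemma \<xi>_measurable[measurable]: "\<xi> k \<in> measurable M N"
  using indep unfolding indep_vars_def by auto

lemma AE_support: "AE \<omega> in M. \<forall>k. \<xi> k \<omega> \<in> \<Xi>"
  using support by (simp add: AE_all_countable)

lemma X_measurable[measurable]: "X k \<in> borel_measurable M"
  and \<Lambda>_measurable[measurable]: "(\<lambda>\<omega>. \<Lambda> k \<omega> i) \<in> borel_measurable M"
  using measurable_iter[of k "\<lambda>\<omega> j. \<xi> j \<omega>" M] by auto

lemma G_measurable_comp[measurable]:
  "i < p \<Longrightarrow> f \<in> borel_measurable M' \<Longrightarrow> g \<in> measurable M' N
    \<Longrightarrow> (\<lambda>\<omega>. G i (f \<omega>) (g \<omega>)) \<in> borel_measurable M'"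
  using measurable_Pair_compose_split[OF G_measurable] by blast

lemma integrable_G_bounded:
  assumes "i < p" "f \<in> borel_measurable M" "\<And>\<omega>. f \<omega> \<in> C"
  shows "integrable M (\<lambda>\<omega>. G i (f \<omega>) (\<xi> k \<omega>))"
proof (rule integrable_const_bound[where B=\<nu>g])
  show "AE \<omega> in M. norm (G i (f \<omega>) (\<xi> k \<omega>)) \<le> \<nu>g"
    using support[of k] by eventually_elim (auto intro: G_abs_bound assms)
qed (use assms in measurable)

lemma abs_expected_G_le:
  assumes "i < p" "x \<in> C"
  shows "\<bar>expected_G i x\<bar> \<le> \<nu>g"
proof -
  have "integrable M (\<lambda>\<omega>. G i x (\<xi> 0 \<omega>))" using integrable_G_bounded[of i "\<lambda>_. x"] assms by simp
  then have "(\<integral>\<omega>. \<bar>G i x (\<xi> 0 \<omega>)\<bar> \<partial>M) \<le> \<nu>g"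
    using support[of 0] by (intro integral_le_const) (auto intro: G_abs_bound assms elim!: AE_mp)
  then show ?thesis unfolding expected_G_def using integral_abs_bound by (rule order.trans[rotated])
qed

lemma expected_G_measurable[measurable]: "i < p \<Longrightarrow> expected_G i \<in> borel_measurable borel"
  unfolding expected_G_def by (rule borel_measurable_lebesgue_integral) measurable

lemma convex_on_expected_G: "i < p \<Longrightarrow> convex_on C (expected_G i)"
  unfolding expected_G_def
  by (rule convex_on_integral[OF convex])
    (use support[of 0] in \<open>auto intro: G_convex integrable_G_bounded[where f="\<lambda>_. x" for x] elim!: AE_mp\<close>)

lemma integral_sample_ident:
  fixes h :: "'b \<Rightarrow> real"
  assumes [measurable]: "h \<in> borel_measurable N"
  shows "(\<integral>\<omega>. h (\<xi> k \<omega>) \<partial>M) = (\<integral>\<omega>. h (\<xi> 0 \<omega>) \<partial>M)"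
  by (metis \<xi>_measurable assms ident integral_distr)

lemma integral_G_X_eq_expected_G:
  assumes "i < p"
  shows "(\<integral>\<omega>. G i (X k \<omega>) (\<xi> k \<omega>) \<partial>M) = (\<integral>\<omega>. expected_G i (X k \<omega>) \<partial>M)"
\<comment> \<open>x^k only depends on the first k samples, which are independent of the sample xi^k.\<close>
proof -
  define Y Z where "Y \<omega> = restrict (\<lambda>j. \<xi> j \<omega>) {..<k}" and "Z \<omega> = restrict (\<lambda>j. \<xi> j \<omega>) {k}" for \<omega>
  define \<Phi> where "\<Phi> y = fst (iter y k)" for y
  have ind: "indep_var (PiM {..<k} (\<lambda>_. N)) Y (PiM {k} (\<lambda>_. N)) Z"
    unfolding Y_def[abs_def] Z_def[abs_def] by (rule indep_var_restrict[OF indep]) auto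
  have [measurable]: "\<Phi> \<in> borel_measurable (PiM {..<k} (\<lambda>_. N))"
    using measurable_iter[of k "\<lambda>y. y" "PiM {..<k} (\<lambda>_. N)"] unfolding \<Phi>_def by auto
  have X_eq: "X k \<omega> = \<Phi> (Y \<omega>)" for \<omega>
    unfolding \<Phi>_def Y_def by (metis iter_prefix_cong lessThan_iff restrict_apply)
  have "(\<lambda>q. G i (\<Phi> (fst q)) (snd q k)) \<in> borel_measurable (PiM {..<k} (\<lambda>_. N) \<Otimes>\<^sub>M PiM {k} (\<lambda>_. N))"
    by (rule G_measurable_comp[OF assms]) measurable
  then have H: "(\<lambda>(y, z). G i (\<Phi> y) (z k)) \<in> borel_measurable (PiM {..<k} (\<lambda>_. N) \<Otimes>\<^sub>M PiM {k} (\<lambda>_. N))"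
    by (simp add: case_prod_beta')
  have "(\<integral>\<omega>. G i (X k \<omega>) (\<xi> k \<omega>) \<partial>M) = (\<integral>\<omega>. G i (\<Phi> (Y \<omega>)) (Z \<omega> k) \<partial>M)"
    by (simp add: X_eq Z_def)
  also have "\<dots> = (\<integral>\<omega>. (\<integral>\<omega>'. G i (\<Phi> (Y \<omega>)) (Z \<omega>' k) \<partial>M) \<partial>M)"
    using integral_indep_var_freeze[OF ind H] integrable_G_bounded[OF assms X_measurable iter_in_C, of k k]
    by (simp add: X_eq Z_def)
  also have "\<dots> = (\<integral>\<omega>. expected_G i (X k \<omega>) \<partial>M)"
  proof (intro Bochner_Integration.integral_cong refl)
    fix \<omega>
    show "(\<integral>\<omega>'. G i (\<Phi> (Y \<omega>)) (Z \<omega>' k) \<partial>M) = expected_G i (X k \<omega>)"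
      using integral_sample_ident[OF G_measurable_comp[OF assms measurable_const measurable_ident_sets],
          of "\<Phi> (Y \<omega>)" k]
      by (simp add: X_eq Z_def expected_G_def)
  qed
  finally show ?thesis .
qed

lemma integrable_expected_G:
  assumes "i < p" "f \<in> borel_measurable M" "\<And>\<omega>. f \<omega> \<in> C"
  shows "integrable M (\<lambda>\<omega>. expected_G i (f \<omega>))"
  by (rule integrable_const_bound[where B=\<nu>g]) (use assms abs_expected_G_le in auto)

lemma AE_multiplier_bound:
  assumes "i < p"
  shows "AE \<omega> in M. \<bar>\<Lambda> k \<omega> i\<bar> \<le> real k * (\<sigma> * (\<nu>g + \<kappa>g * diameter C))"
  using AE_support by eventually_elim (auto intro: iter_multiplier_abs_bound assms)

lemma integrable_multiplier: "i < p \<Longrightarrow> integrable M (\<lambda>\<omega>. \<Lambda> k \<omega> i)"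
  by (rule integrable_const_bound) (use AE_multiplier_bound in auto)

lemma integrable_vnorm_multiplier: "integrable M (\<lambda>\<omega>. vnorm p (\<Lambda> k \<omega>))"
proof (rule integrable_const_bound)
  show "AE \<omega> in M. norm (vnorm p (\<Lambda> k \<omega>)) \<le> sqrt (real p) * (real k * (\<sigma> * (\<nu>g + \<kappa>g * diameter C)))"
    using AE_support by eventually_elim (auto intro!: vnorm_le iter_multiplier_abs_bound simp: vnorm_nonneg)
qed (simp add: vnorm_def)

lemma integral_expected_G_average_le:
  assumes "i < p" "K > 0"
  shows "(\<integral>\<omega>. expected_G i ((1 / real K) *\<^sub>R (\<Sum>k<K. X k \<omega>)) \<partial>M)
    \<le> (\<integral>\<omega>. (1 / real K) * (\<Sum>k<K. G i (X k \<omega>) (\<xi> k \<omega>)) \<partial>M)"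
proof -
  have "(\<integral>\<omega>. expected_G i ((1 / real K) *\<^sub>R (\<Sum>k<K. X k \<omega>)) \<partial>M)
      \<le> (\<integral>\<omega>. (1 / real K) * (\<Sum>k<K. expected_G i (X k \<omega>)) \<partial>M)"
  proof (rule integral_mono)
    show "integrable M (\<lambda>\<omega>. expected_G i ((1 / real K) *\<^sub>R (\<Sum>k<K. X k \<omega>)))"
      using assms iter_in_C by (intro integrable_expected_G convex_average_mem[OF convex]) auto
    show "integrable M (\<lambda>\<omega>. (1 / real K) * (\<Sum>k<K. expected_G i (X k \<omega>)))"
      using assms(1) iter_in_C
      by (intro integrable_mult_right Bochner_Integration.integrable_sum integrable_expected_G) auto
    show "expected_G i ((1 / real K) *\<^sub>R (\<Sum>k<K. X k \<omega>)) \<le> (1 / real K) * (\<Sum>k<K. expected_G i (X k \<omega>))"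
      for \<omega> using convex_on_average_le[OF convex_on_expected_G[OF assms(1)] assms(2)] iter_in_C .
  qed
  also have "\<dots> = (\<integral>\<omega>. (1 / real K) * (\<Sum>k<K. G i (X k \<omega>) (\<xi> k \<omega>)) \<partial>M)"
    using assms(1) integrable_G_bounded[OF assms(1) X_measurable iter_in_C] iter_in_C
    by (simp add: integral_G_X_eq_expected_G integrable_expected_G)
  finally show ?thesis .
qed

lemma AE_constraint_average_bound:
  assumes "i < p" "K > 0"
  shows "AE \<omega> in M. (1 / real K) * (\<Sum>k<K. G i (X k \<omega>) (\<xi> k \<omega>))
    \<le> 1 / (\<sigma> * real K) * \<Lambda> K \<omega> i + \<kappa>g / \<alpha> * (\<kappa>f + sqrt (real p) * \<nu>g * \<kappa>g * \<sigma>)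
      + sqrt (real p) * \<kappa>g\<^sup>2 / (\<alpha> * real K) * (\<Sum>k<K. vnorm p (\<Lambda> k \<omega>))"
  using AE_support by eventually_elim (rule iter_constraint_average_bound[OF assms(1) _ assms(2)], blast)

theorem expected_constraint_violation_bound:
  assumes "i < p" "K > 0"
  shows "(\<integral>\<omega>. expected_G i ((1 / real K) *\<^sub>R (\<Sum>k<K. X k \<omega>)) \<partial>M)
    \<le> 1 / (\<sigma> * real K) * (\<integral>\<omega>. \<Lambda> K \<omega> i \<partial>M)
      + \<kappa>g / \<alpha> * (\<kappa>f + sqrt (real p) * \<nu>g * \<kappa>g * \<sigma>)
      + sqrt (real p) * \<kappa>g\<^sup>2 / (\<alpha> * real K) * (\<Sum>k<K. (\<integral>\<omega>. vnorm p (\<Lambda> k \<omega>) \<partial>M))"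
proof -
  note integrable = integrable_G_bounded[OF assms(1) X_measurable iter_in_C]
    integrable_multiplier[OF assms(1)] integrable_vnorm_multiplier
  have "(\<integral>\<omega>. (1 / real K) * (\<Sum>k<K. G i (X k \<omega>) (\<xi> k \<omega>)) \<partial>M)
      \<le> (\<integral>\<omega>. 1 / (\<sigma> * real K) * \<Lambda> K \<omega> i + \<kappa>g / \<alpha> * (\<kappa>f + sqrt (real p) * \<nu>g * \<kappa>g * \<sigma>)
        + sqrt (real p) * \<kappa>g\<^sup>2 / (\<alpha> * real K) * (\<Sum>k<K. vnorm p (\<Lambda> k \<omega>)) \<partial>M)"
    by (rule integral_mono_AE[OF _ _ AE_constraint_average_bound[OF assms]]) (use integrable in auto)
  also have "\<dots> = 1 / (\<sigma> * real K) * (\<integral>\<omega>. \<Lambda> K \<omega> i \<partial>M)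
      + \<kappa>g / \<alpha> * (\<kappa>f + sqrt (real p) * \<nu>g * \<kappa>g * \<sigma>)
      + sqrt (real p) * \<kappa>g\<^sup>2 / (\<alpha> * real K) * (\<Sum>k<K. (\<integral>\<omega>. vnorm p (\<Lambda> k \<omega>) \<partial>M))"
    using integrable by (simp add: prob_space)
  finally show ?thesis using integral_expected_G_average_le[OF assms] by linarith
qed

end

theorem lemma7:
  fixes M :: "'w measure" and N :: "'b measure" and \<xi> :: "nat \<Rightarrow> 'w \<Rightarrow> 'b"
    and \<Xi> :: "'b set" and C :: "'a::euclidean_space set"
    and F :: "'a \<Rightarrow> 'b \<Rightarrow> real" and G :: "nat \<Rightarrow> 'a \<Rightarrow> 'b \<Rightarrow> real"
    and v0 :: "'a \<Rightarrow> 'b \<Rightarrow> 'a" and v :: "nat \<Rightarrow> 'a \<Rightarrow> 'b \<Rightarrow> 'a"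
    and p K :: nat and \<sigma> \<alpha> R \<nu>g \<kappa>f \<kappa>g :: real and x0 :: 'a
  assumes M: "prob_space M"
    and iid: "prob_space.indep_vars M (\<lambda>_. N) \<xi> UNIV"
      "\<And>k. distr M N (\<xi> k) = distr M N (\<xi> 0)"
    and supp: "\<And>k. AE \<omega> in M. \<xi> k \<omega> \<in> \<Xi>"
    and C: "compact C" "convex C" "C \<noteq> {}"
    and Fcvx: "\<And>s. s \<in> \<Xi> \<Longrightarrow> convex_on C (\<lambda>x. F x s) \<and> continuous_on C (\<lambda>x. F x s)"
    and Gcvx: "\<And>i s. i < p \<Longrightarrow> s \<in> \<Xi> \<Longrightarrow> convex_on C (\<lambda>x. G i x s) \<and> continuous_on C (\<lambda>x. G i x s)"
    and Fmeas: "(\<lambda>(x, s). F x s) \<in> borel_measurable (borel \<Otimes>\<^sub>M N)"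
    and Gmeas: "\<And>i. i < p \<Longrightarrow> (\<lambda>(x, s). G i x s) \<in> borel_measurable (borel \<Otimes>\<^sub>M N)"
    and v0meas: "(\<lambda>(x, s). v0 x s) \<in> borel_measurable (borel \<Otimes>\<^sub>M N)"
    and vmeas: "\<And>i. i < p \<Longrightarrow> (\<lambda>(x, s). v i x s) \<in> borel_measurable (borel \<Otimes>\<^sub>M N)"
    and ffin: "\<And>x. x \<in> C \<Longrightarrow> integrable M (\<lambda>\<omega>. F x (\<xi> 0 \<omega>))"
    and gfin: "\<And>i x. i < p \<Longrightarrow> x \<in> C \<Longrightarrow> integrable M (\<lambda>\<omega>. G i x (\<xi> 0 \<omega>))"
    and v0sub: "\<And>x s. x \<in> C \<Longrightarrow> s \<in> \<Xi> \<Longrightarrow> subgrad_on C (\<lambda>y. F y s) x (v0 x s)"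
    and vsub: "\<And>i x s. i < p \<Longrightarrow> x \<in> C \<Longrightarrow> s \<in> \<Xi> \<Longrightarrow> subgrad_on C (\<lambda>y. G i y s) x (v i x s)"
    and A1: "\<And>x y. x \<in> C \<Longrightarrow> y \<in> C \<Longrightarrow> norm (x - y) \<le> R"
    and A2: "\<And>x s. x \<in> C \<Longrightarrow> s \<in> \<Xi> \<Longrightarrow> sqrt (\<Sum>i<p. (G i x s)^2) \<le> \<nu>g"
    and A3: "\<And>x s. x \<in> C \<Longrightarrow> s \<in> \<Xi> \<Longrightarrow> norm (v0 x s) \<le> \<kappa>f"
      "\<And>i x s. i < p \<Longrightarrow> x \<in> C \<Longrightarrow> s \<in> \<Xi> \<Longrightarrow> norm (v i x s) \<le> \<kappa>g"
    and par: "\<sigma> > 0" "\<alpha> > 0" "2 * \<alpha> - real p * \<kappa>g^2 * \<sigma> > 0" "x0 \<in> C"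
    and K: "K \<ge> 1"
  shows "\<forall>i<p.
    (\<integral>\<omega>. (\<integral>\<omega>'. G i ((1 / real K) *\<^sub>R (\<Sum>k<K. fst (slpmm C p \<sigma> \<alpha> F G v0 v x0 (\<lambda>j. \<xi> j \<omega>) k))) (\<xi> 0 \<omega>') \<partial>M) \<partial>M)
    \<le> 1 / (\<sigma> * real K) * (\<integral>\<omega>. snd (slpmm C p \<sigma> \<alpha> F G v0 v x0 (\<lambda>j. \<xi> j \<omega>) K) i \<partial>M)
      + \<kappa>g / \<alpha> * (\<kappa>f + sqrt (real p) * \<nu>g * \<kappa>g * \<sigma>)
      + sqrt (real p) * \<kappa>g^2 / (\<alpha> * real K) *
          (\<Sum>k<K. (\<integral>\<omega>. vnorm p (snd (slpmm C p \<sigma> \<alpha> F G v0 v x0 (\<lambda>j. \<xi> j \<omega>) k)) \<partial>M))"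
proof -
  interpret prob_space M by (rule M)
  interpret slpmm_stochastic C p \<sigma> \<alpha> F G v0 v x0 \<Xi> \<nu>g \<kappa>f \<kappa>g N M \<xi>
    by unfold_locales (use assms emeasure_space_1 in auto)
  show ?thesis
    using expected_constraint_violation_bound[unfolded expected_G_def] K by simp
qed

end
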